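(* Let $\mathbb{F}$ be an infinite field with $\operatorname{char}(\mathbb{F})\neq 2$, let $G$ be a group with a group involution $\ast$ and a non-trivial orientation $\sigma$ such that $gg^\ast\in N=\ker\sigma$ for all $g\in G$, and let $\circledast$ be the associated oriented involution of $\mathbb{F}G$. Assume $\mathbb{F}G$ is normal with respect to $\circledast$, and let $g,h\in G$ with $gh\neq hg$. (1) If either $\sigma(g)=\sigma(h)=1$, or $\sigma(g)=-1$ and $\sigma(h)=1$, then $g^2h=hg^2$. (2) If either $\sigma(g)=1$ and $\sigma(h)=-1$, or $\sigma(g)=\sigma(h)=-1$, then $g^2h=(g^2h)^\ast$. In particular, $(m^2,n)=1$ for all $m,n\in N$.
   Context: A group involution on $G$ is a map $\ast:G\to G$ with $(gh)^\ast=h^\ast g^\ast$ and $(g^\ast)^\ast=g$. An orientation is a group homomorphism $\sigma:G\to\{\pm1\}$. The oriented involution is $(\sum_g\alpha_g g)^\circledast=\sum_g\alpha_g\sigma(g)g^\ast$ on $\mathbb{F}G$. $\mathbb{F}G$ is normal if $\alpha\alpha^\circledast=\alpha^\circledast\alpha$ for all $\alpha\in\mathbb{F}G$. $(x,y)=x^{-1}y^{-1}xy$. *)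

theory Defs
  imports "HOL-Algebra.Group"
begin

definition group_involution :: "('g,'m) monoid_scheme \<Rightarrow> ('g \<Rightarrow> 'g) \<Rightarrow> bool" where
  "group_involution G s \<longleftrightarrow>
     (\<forall>x\<in>carrier G. s x \<in> carrier G) \<and>
     (\<forall>x\<in>carrier G. \<forall>y\<in>carrier G. s (x \<otimes>\<^bsub>G\<^esub> y) = s y \<otimes>\<^bsub>G\<^esub> s x) \<and>
     (\<forall>x\<in>carrier G. s (s x) = x)"

definition orientation :: "('g,'m) monoid_scheme \<Rightarrow> ('g \<Rightarrow> int) \<Rightarrow> bool" where
  "orientation G \<sigma> \<longleftrightarrow>
     (\<forall>x\<in>carrier G. \<sigma> x \<in> {1, -1}) \<and>
     (\<forall>x\<in>carrier G. \<forall>y\<in>carrier G. \<sigma> (x \<otimes>\<^bsub>G\<^esub> y) = \<sigma> x * \<sigma> y)"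

text \<open>Elements of the group algebra FG: finitely supported functions on the carrier.\<close>
definition gr_elem :: "('g,'m) monoid_scheme \<Rightarrow> ('g \<Rightarrow> 'f::zero) \<Rightarrow> bool" where
  "gr_elem G a \<longleftrightarrow> finite {x\<in>carrier G. a x \<noteq> 0} \<and> (\<forall>x. x \<notin> carrier G \<longrightarrow> a x = 0)"

definition gr_mult :: "('g,'m) monoid_scheme \<Rightarrow> ('g \<Rightarrow> 'f::ring_1) \<Rightarrow> ('g \<Rightarrow> 'f) \<Rightarrow> 'g \<Rightarrow> 'f" where
  "gr_mult G a b = (\<lambda>x. if x \<in> carrier G then
      (\<Sum>(y,z)\<in>{(y,z). y \<in> carrier G \<and> z \<in> carrier G \<and> a y \<noteq> 0 \<and> b z \<noteq> 0 \<and> y \<otimes>\<^bsub>G\<^esub> z = x}.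
          a y * b z)
    else 0)"

text \<open>Oriented involution: (\<Sum> a_g g) maps to \<Sum> a_g \<sigma>(g) g*, so the coefficient at x is
  \<sigma>(x*) a(x*).\<close>
definition oriented_inv :: "('g,'m) monoid_scheme \<Rightarrow> ('g \<Rightarrow> 'g) \<Rightarrow> ('g \<Rightarrow> int) \<Rightarrow> ('g \<Rightarrow> 'f::ring_1) \<Rightarrow> 'g \<Rightarrow> 'f" where
  "oriented_inv G s \<sigma> a = (\<lambda>x. if x \<in> carrier G then of_int (\<sigma> (s x)) * a (s x) else 0)"

definition gr_normal :: "('g,'m) monoid_scheme \<Rightarrow> ('g \<Rightarrow> 'g) \<Rightarrow> ('g \<Rightarrow> int) \<Rightarrow> 'f::ring_1 itself \<Rightarrow> bool" where
  "gr_normal G s \<sigma> _ \<longleftrightarrow>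
     (\<forall>a :: 'g \<Rightarrow> 'f. gr_elem G a \<longrightarrow>
        gr_mult G a (oriented_inv G s \<sigma> a) = gr_mult G (oriented_inv G s \<sigma> a) a)"

end

theory Submission
  imports Defs
begin

text \<open>Normality applied to the two-term element \<open>x + y\<close> (together with normality of \<open>x\<close> and \<open>y\<close>
  alone) gives the identity \<open>\<sigma>(y) x y\<^sup>* + \<sigma>(x) y x\<^sup>* = \<sigma>(x) x\<^sup>* y + \<sigma>(y) y\<^sup>* x\<close> in \<open>FG\<close>.
  Taking \<open>x = g\<close>, \<open>y = h\<^sup>*\<close> for non-commuting \<open>g, h\<close> and comparing coefficients at \<open>gh\<close>,
  the characteristic \<open>\<noteq> 2\<close> forces \<open>(gh)\<^sup>* = hg\<close> when \<open>\<sigma>(g) = \<sigma>(h)\<close> and \<open>(gh)\<^sup>* = gh\<close> otherwise.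
  Applying this to the pairs \<open>(g\<^sup>2, h)\<close> and \<open>(g, gh)\<close> yields both claims, and the
  commutator identity is the first claim for \<open>\<sigma>(h) = 1\<close>.\<close>

definition gr_monom :: "'f::zero \<Rightarrow> 'g \<Rightarrow> 'g \<Rightarrow> 'f" where
  "gr_monom c x = (\<lambda>z. if z = x then c else 0)"

lemma gr_elem_monom: "x \<in> carrier G \<Longrightarrow> gr_elem G (gr_monom c x)"
  unfolding gr_elem_def gr_monom_def by (auto intro: finite_subset[of _ "{x}"])

lemma gr_elem_add:
  fixes a b :: "'g \<Rightarrow> 'f::ring_1"
  assumes "gr_elem G a" "gr_elem G b"
  shows "gr_elem G (\<lambda>z. a z + b z)"
proof -
  have "{x\<in>carrier G. a x + b x \<noteq> 0} \<subseteq> {x\<in>carrier G. a x \<noteq> 0} \<union> {x\<in>carrier G. b x \<noteq> 0}"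
    by auto
  then show ?thesis using assms unfolding gr_elem_def by (auto intro: finite_subset)
qed

lemma gr_mult_eq_sum:
  fixes a b :: "'g \<Rightarrow> 'f::ring_1"
  assumes "finite A" "finite B" "A \<subseteq> carrier G" "B \<subseteq> carrier G"
    and "\<And>y. a y \<noteq> 0 \<Longrightarrow> y \<in> A" "\<And>w. b w \<noteq> 0 \<Longrightarrow> w \<in> B"
  shows "gr_mult G a b z = (if z \<in> carrier G then
     (\<Sum>y\<in>A. \<Sum>w\<in>B. if y \<otimes>\<^bsub>G\<^esub> w = z then a y * b w else 0) else 0)"
proof (cases "z \<in> carrier G")
  case True
  let ?S = "{(y,w). y \<in> carrier G \<and> w \<in> carrier G \<and> a y \<noteq> 0 \<and> b w \<noteq> 0 \<and> y \<otimes>\<^bsub>G\<^esub> w = z}"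
  have "?S \<subseteq> A \<times> B" using assms by auto
  then have "(\<Sum>(y,w)\<in>?S. a y * b w) = (\<Sum>(y,w)\<in>A\<times>B. if y \<otimes>\<^bsub>G\<^esub> w = z then a y * b w else 0)"
    by (intro sum.mono_neutral_cong_left) (use assms in \<open>auto split: if_splits\<close>)
  then show ?thesis using True by (simp add: gr_mult_def sum.cartesian_product)
qed (simp add: gr_mult_def)

lemma gr_mult_add_left:
  fixes a1 a2 b :: "'g \<Rightarrow> 'f::ring_1"
  assumes "gr_elem G a1" "gr_elem G a2" "gr_elem G b"
  shows "gr_mult G (\<lambda>z. a1 z + a2 z) b = (\<lambda>z. gr_mult G a1 b z + gr_mult G a2 b z)"
proof
  fix z
  let ?A = "{x\<in>carrier G. a1 x \<noteq> 0} \<union> {x\<in>carrier G. a2 x \<noteq> 0}"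
  let ?B = "{x\<in>carrier G. b x \<noteq> 0}"
  have fin: "finite ?A" "finite ?B" using assms unfolding gr_elem_def by auto
  note expand = gr_mult_eq_sum[OF fin, where G = G and z = z]
  show "gr_mult G (\<lambda>z. a1 z + a2 z) b z = gr_mult G a1 b z + gr_mult G a2 b z"
    using assms unfolding gr_elem_def
    by (subst (1 2 3) expand) (auto simp: sum.distrib[symmetric] distrib_right intro!: sum.cong)
qed

lemma gr_mult_add_right:
  fixes a b1 b2 :: "'g \<Rightarrow> 'f::ring_1"
  assumes "gr_elem G a" "gr_elem G b1" "gr_elem G b2"
  shows "gr_mult G a (\<lambda>z. b1 z + b2 z) = (\<lambda>z. gr_mult G a b1 z + gr_mult G a b2 z)"
proof
  fix z
  let ?A = "{x\<in>carrier G. a x \<noteq> 0}"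
  let ?B = "{x\<in>carrier G. b1 x \<noteq> 0} \<union> {x\<in>carrier G. b2 x \<noteq> 0}"
  have fin: "finite ?A" "finite ?B" using assms unfolding gr_elem_def by auto
  note expand = gr_mult_eq_sum[OF fin, where G = G and z = z]
  show "gr_mult G a (\<lambda>z. b1 z + b2 z) z = gr_mult G a b1 z + gr_mult G a b2 z"
    using assms unfolding gr_elem_def
    by (subst (1 2 3) expand) (auto simp: sum.distrib[symmetric] distrib_left intro!: sum.cong)
qed

lemma gr_mult_monom:
  fixes c d :: "'f::ring_1"
  assumes "monoid G" "x \<in> carrier G" "y \<in> carrier G"
  shows "gr_mult G (gr_monom c x) (gr_monom d y) = gr_monom (c * d) (x \<otimes>\<^bsub>G\<^esub> y)"
proof
  fix z
  have "gr_mult G (gr_monom c x) (gr_monom d y) z = (if z \<in> carrier G then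
     (\<Sum>x'\<in>{x}. \<Sum>y'\<in>{y}. if x' \<otimes>\<^bsub>G\<^esub> y' = z then gr_monom c x x' * gr_monom d y y' else 0)
     else 0)"
    by (rule gr_mult_eq_sum) (use assms in \<open>auto simp: gr_monom_def split: if_splits\<close>)
  then show "gr_mult G (gr_monom c x) (gr_monom d y) z = gr_monom (c * d) (x \<otimes>\<^bsub>G\<^esub> y) z"
    using assms by (auto simp: gr_monom_def monoid.m_closed)
qed

lemma oriented_inv_add:
  "oriented_inv G s \<sigma> (\<lambda>z. a z + b z) = (\<lambda>z. oriented_inv G s \<sigma> a z + oriented_inv G s \<sigma> b z)"
  by (auto simp: oriented_inv_def distrib_left)

lemma oriented_inv_monom:
  assumes "group_involution G s" "x \<in> carrier G"
  shows "oriented_inv G s \<sigma> (gr_monom c x) = gr_monom (of_int (\<sigma> x) * c) (s x)"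
proof
  fix z
  have inv: "\<And>u. u \<in> carrier G \<Longrightarrow> s u \<in> carrier G \<and> s (s u) = u"
    using assms(1) unfolding group_involution_def by auto
  then have "z \<in> carrier G \<and> s z = x \<longleftrightarrow> z = s x" using assms(2) by metis
  then show "oriented_inv G s \<sigma> (gr_monom c x) z = gr_monom (of_int (\<sigma> x) * c) (s x) z"
    using inv[OF assms(2)] unfolding oriented_inv_def gr_monom_def by auto
qed

lemma (in group) commutator_eq_one:
  assumes "x \<in> carrier G" "y \<in> carrier G" "x \<otimes> y = y \<otimes> x"
  shows "inv x \<otimes> inv y \<otimes> x \<otimes> y = \<one>"
proof -
  have "inv x \<otimes> inv y \<otimes> x \<otimes> y = inv x \<otimes> (inv y \<otimes> (y \<otimes> x))"
    using assms by (simp add: m_assoc)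
  also have "\<dots> = \<one>" using assms(1,2) by (simp add: m_assoc[symmetric])
  finally show ?thesis .
qed

locale oriented_involutive_group = group +
  fixes s :: "'a \<Rightarrow> 'a" and \<sigma> :: "'a \<Rightarrow> int"
  assumes involution: "group_involution G s"
    and orientation: "orientation G \<sigma>"
    and orientation_mult_involution: "\<forall>g\<in>carrier G. \<sigma> (g \<otimes> s g) = 1"
begin

lemma involution_closed [simp]: "x \<in> carrier G \<Longrightarrow> s x \<in> carrier G"
  using involution unfolding group_involution_def by blast

lemma involution_mult: "x \<in> carrier G \<Longrightarrow> y \<in> carrier G \<Longrightarrow> s (x \<otimes> y) = s y \<otimes> s x"
  using involution unfolding group_involution_def by blast

lemma involution_involution [simp]: "x \<in> carrier G \<Longrightarrow> s (s x) = x"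
  using involution unfolding group_involution_def by blast

lemma orientation_cases: "x \<in> carrier G \<Longrightarrow> \<sigma> x = 1 \<or> \<sigma> x = -1"
  using orientation unfolding orientation_def by blast

lemma orientation_mult: "x \<in> carrier G \<Longrightarrow> y \<in> carrier G \<Longrightarrow> \<sigma> (x \<otimes> y) = \<sigma> x * \<sigma> y"
  using orientation unfolding orientation_def by blast

lemma orientation_involution [simp]: "x \<in> carrier G \<Longrightarrow> \<sigma> (s x) = \<sigma> x"
  using orientation_mult_involution orientation_mult[of x "s x"]
    orientation_cases[of x] orientation_cases[of "s x"]
  by auto

lemma orientation_square [simp]: "x \<in> carrier G \<Longrightarrow> \<sigma> (x \<otimes> x) = 1"
  using orientation_mult[of x x] orientation_cases[of x] by auto

lemma normal_two_monomials:
  assumes normal: "gr_normal G s \<sigma> TYPE('f::ring_1)"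
    and x: "x \<in> carrier G" and y: "y \<in> carrier G"
  shows "gr_monom (of_int (\<sigma> y)) (x \<otimes> s y) z + gr_monom (of_int (\<sigma> x)) (y \<otimes> s x) z
       = gr_monom (of_int (\<sigma> x)) (s x \<otimes> y) z + gr_monom (of_int (\<sigma> y) :: 'f) (s y \<otimes> x) z"
proof -
  let ?x = "gr_monom (1::'f) x" and ?y = "gr_monom (1::'f) y"
  let ?a = "\<lambda>z. ?x z + ?y z"
  have commute: "gr_mult G b (oriented_inv G s \<sigma> b) = gr_mult G (oriented_inv G s \<sigma> b) b"
    if "gr_elem G b" for b :: "'a \<Rightarrow> 'f"
    using normal that unfolding gr_normal_def by blast
  have elems: "gr_elem G ?x" "gr_elem G ?y"
    "gr_elem G (gr_monom (of_int (\<sigma> x) :: 'f) (s x))" "gr_elem G (gr_monom (of_int (\<sigma> y) :: 'f) (s y))"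
    using x y by (simp_all add: gr_elem_monom)
  have inv_x: "oriented_inv G s \<sigma> ?x = gr_monom (of_int (\<sigma> x)) (s x)"
    and inv_y: "oriented_inv G s \<sigma> ?y = gr_monom (of_int (\<sigma> y)) (s y)"
    using x y by (simp_all add: oriented_inv_monom[OF involution])
  note products = gr_mult_monom[OF is_monoid] x y involution_closed
  have normal_x: "gr_monom (of_int (\<sigma> x) :: 'f) (x \<otimes> s x) z = gr_monom (of_int (\<sigma> x)) (s x \<otimes> x) z"
    using fun_cong[OF commute[OF elems(1)], of z] by (simp add: inv_x products)
  have normal_y: "gr_monom (of_int (\<sigma> y) :: 'f) (y \<otimes> s y) z = gr_monom (of_int (\<sigma> y)) (s y \<otimes> y) z"
    using fun_cong[OF commute[OF elems(2)], of z] by (simp add: inv_y products)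
  have "gr_monom (of_int (\<sigma> x)) (x \<otimes> s x) z + gr_monom (of_int (\<sigma> y)) (x \<otimes> s y) z +
      (gr_monom (of_int (\<sigma> x)) (y \<otimes> s x) z + gr_monom (of_int (\<sigma> y)) (y \<otimes> s y) z)
    = gr_monom (of_int (\<sigma> x)) (s x \<otimes> x) z + gr_monom (of_int (\<sigma> x)) (s x \<otimes> y) z +
      (gr_monom (of_int (\<sigma> y)) (s y \<otimes> x) z + gr_monom (of_int (\<sigma> y) :: 'f) (s y \<otimes> y) z)"
    using fun_cong[OF commute[OF gr_elem_add[OF elems(1,2)]], of z] elems
    by (simp add: oriented_inv_add inv_x inv_y gr_elem_add gr_mult_add_left gr_mult_add_right products)
  then show ?thesis unfolding normal_x normal_y by (simp add: algebra_simps)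
qed

lemma normal_coefficient_at_product:
  assumes normal: "gr_normal G s \<sigma> TYPE('f::ring_1)"
    and g: "g \<in> carrier G" and h: "h \<in> carrier G" and noncommuting: "g \<otimes> h \<noteq> h \<otimes> g"
  shows "of_int (\<sigma> h) + (if g \<otimes> h = s (g \<otimes> h) then of_int (\<sigma> g) else 0)
       = (if g \<otimes> h = s (h \<otimes> g) then of_int (\<sigma> g) else (0::'f))"
  using normal_two_monomials[OF normal g involution_closed[OF h], of "g \<otimes> h"] g h noncommuting
  by (simp add: gr_monom_def involution_mult)

lemma normal_product_same_orientation:
  assumes normal: "gr_normal G s \<sigma> TYPE('f::field)" and two: "(2::'f) \<noteq> 0"
    and g: "g \<in> carrier G" and h: "h \<in> carrier G" and noncommuting: "g \<otimes> h \<noteq> h \<otimes> g"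
    and same: "\<sigma> g = \<sigma> h"
  shows "s (g \<otimes> h) = h \<otimes> g"
proof -
  have "g \<otimes> h = s (h \<otimes> g)"
  proof (rule ccontr)
    assume "g \<otimes> h \<noteq> s (h \<otimes> g)"
    then show False
      using normal_coefficient_at_product[OF normal g h noncommuting] same two orientation_cases[OF h]
      by (auto split: if_splits)
  qed
  then show ?thesis using g h by simp
qed

lemma normal_product_opposite_orientation:
  assumes normal: "gr_normal G s \<sigma> TYPE('f::field)" and two: "(2::'f) \<noteq> 0"
    and g: "g \<in> carrier G" and h: "h \<in> carrier G" and noncommuting: "g \<otimes> h \<noteq> h \<otimes> g"
    and opposite: "\<sigma> g \<noteq> \<sigma> h"
  shows "s (g \<otimes> h) = g \<otimes> h"
proof (rule ccontr)
  have "(1::'f) \<noteq> -1" using two by (metis one_add_one add_eq_0_iff)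
  moreover assume "s (g \<otimes> h) \<noteq> g \<otimes> h"
  ultimately show False
    using normal_coefficient_at_product[OF normal g h noncommuting] opposite
      orientation_cases[OF g] orientation_cases[OF h]
    by (auto split: if_splits)
qed

lemma normal_square_commutes:
  assumes normal: "gr_normal G s \<sigma> TYPE('f::field)" and two: "(2::'f) \<noteq> 0"
    and g: "g \<in> carrier G" and h: "h \<in> carrier G" and noncommuting: "g \<otimes> h \<noteq> h \<otimes> g"
    and kernel: "\<sigma> h = 1"
  shows "g \<otimes> g \<otimes> h = h \<otimes> (g \<otimes> g)"
proof (rule ccontr)
  assume "g \<otimes> g \<otimes> h \<noteq> h \<otimes> (g \<otimes> g)"
  then have "s (g \<otimes> g \<otimes> h) = h \<otimes> (g \<otimes> g)"
    using normal_product_same_orientation[OF normal two _ h] g kernel by simp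
  moreover have "g \<otimes> (g \<otimes> h) \<noteq> g \<otimes> h \<otimes> g"
    using noncommuting g h by (simp add: m_assoc)
  then have "s (g \<otimes> (g \<otimes> h)) = g \<otimes> h \<otimes> g"
    using normal_product_same_orientation[OF normal two g] g h kernel orientation_mult by simp
  ultimately have "h \<otimes> g \<otimes> g = g \<otimes> h \<otimes> g"
    using g h by (simp add: m_assoc)
  then show False using noncommuting g h by simp
qed

lemma normal_square_fixed:
  assumes normal: "gr_normal G s \<sigma> TYPE('f::field)" and two: "(2::'f) \<noteq> 0"
    and g: "g \<in> carrier G" and h: "h \<in> carrier G" and noncommuting: "g \<otimes> h \<noteq> h \<otimes> g"
    and odd: "\<sigma> h = -1"
  shows "g \<otimes> g \<otimes> h = s (g \<otimes> g \<otimes> h)"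
proof -
  have "g \<otimes> (g \<otimes> h) \<noteq> g \<otimes> h \<otimes> g"
    using noncommuting g h by (simp add: m_assoc)
  moreover have "\<sigma> g \<noteq> \<sigma> (g \<otimes> h)"
    using g h odd orientation_mult orientation_cases[OF g] by auto
  ultimately have "s (g \<otimes> (g \<otimes> h)) = g \<otimes> (g \<otimes> h)"
    using normal_product_opposite_orientation[OF normal two g] g h by simp
  then show ?thesis using g h by (simp add: m_assoc)
qed

lemma normal_square_commutes_kernel:
  assumes normal: "gr_normal G s \<sigma> TYPE('f::field)" and two: "(2::'f) \<noteq> 0"
    and m: "m \<in> carrier G" and n: "n \<in> carrier G" and kernel: "\<sigma> n = 1"
  shows "m \<otimes> m \<otimes> n = n \<otimes> (m \<otimes> m)"
proof (cases "m \<otimes> n = n \<otimes> m")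
  case True
  then show ?thesis using m n by (metis m_assoc)
next
  case False
  then show ?thesis using normal_square_commutes[OF normal two m n _ kernel] by blast
qed

end

theorem lemma7:
  fixes G :: "('g,'m) monoid_scheme" and s :: "'g \<Rightarrow> 'g" and \<sigma> :: "'g \<Rightarrow> int"
  assumes "group G"
    and "infinite (UNIV :: 'f::field set)"
    and "(2::'f) \<noteq> 0"
    and "group_involution G s"
    and "orientation G \<sigma>"
    and "\<exists>x\<in>carrier G. \<sigma> x = -1"
    and "\<forall>g\<in>carrier G. \<sigma> (g \<otimes>\<^bsub>G\<^esub> s g) = 1"
    and "gr_normal G s \<sigma> TYPE('f)"
  shows "(\<forall>g\<in>carrier G. \<forall>h\<in>carrier G. g \<otimes>\<^bsub>G\<^esub> h \<noteq> h \<otimes>\<^bsub>G\<^esub> g \<longrightarrow>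
            (((\<sigma> g = 1 \<and> \<sigma> h = 1) \<or> (\<sigma> g = -1 \<and> \<sigma> h = 1)) \<longrightarrow>
               g \<otimes>\<^bsub>G\<^esub> g \<otimes>\<^bsub>G\<^esub> h = h \<otimes>\<^bsub>G\<^esub> (g \<otimes>\<^bsub>G\<^esub> g)) \<and>
            (((\<sigma> g = 1 \<and> \<sigma> h = -1) \<or> (\<sigma> g = -1 \<and> \<sigma> h = -1)) \<longrightarrow>
               g \<otimes>\<^bsub>G\<^esub> g \<otimes>\<^bsub>G\<^esub> h = s (g \<otimes>\<^bsub>G\<^esub> g \<otimes>\<^bsub>G\<^esub> h)))
       \<and> (\<forall>m\<in>{x\<in>carrier G. \<sigma> x = 1}. \<forall>n\<in>{x\<in>carrier G. \<sigma> x = 1}.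
            inv\<^bsub>G\<^esub> (m \<otimes>\<^bsub>G\<^esub> m) \<otimes>\<^bsub>G\<^esub> inv\<^bsub>G\<^esub> n \<otimes>\<^bsub>G\<^esub> (m \<otimes>\<^bsub>G\<^esub> m) \<otimes>\<^bsub>G\<^esub> n = \<one>\<^bsub>G\<^esub>)"
proof -
  interpret oriented_involutive_group G s \<sigma>
    using assms by (simp add: oriented_involutive_group_def oriented_involutive_group_axioms_def)
  note normal = assms(8) and two = assms(3)
  show ?thesis
    using normal_square_commutes[OF normal two] normal_square_fixed[OF normal two]
      commutator_eq_one normal_square_commutes_kernel[OF normal two]
    by auto
qed

end
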